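(* Let $(M^n,g,k)$ be an initial data set with $M$ spin, and let $\psi\in\overline{\mathcal S}(M)$ be a $C^1$ solution of $$\nabla_i\psi=-\tfrac12k_{ij}e_je_0\psi-\tfrac12\mathbf ie_i\psi\quad(i=1,\dots,n).$$ Writing $N=N(\psi)$, $X=X(\psi)$, $Y=Y(\psi)$, $\omega=\omega(\psi)$, define $$\varphi=e_0\Big(N-\mathbf iY+e_0X-\tfrac12\mathbf ie_0\,\omega\Big)\psi .$$ Then $\varphi$ also satisfies $\nabla_i\varphi=-\frac12k_{ij}e_je_0\varphi-\frac12\mathbf ie_i\varphi$ for all $i$.
   Context: Spinor conventions. For a Riemannian spin manifold $(M^n,g)$, $\mathcal S$ is the complex spinor bundle with Hermitian inner product $\langle\cdot,\cdot\rangle$ (complex linear in the first slot) and spin connection $\nabla$; Clifford multiplication by tangent vectors satisfies $vw+wv=-2g(v,w)$ and vectors act skew-Hermitian. Set $\overline{\mathcal S}=\mathcal S\oplus\mathcal S$ with direct-sum inner product and connection, where a tangent vector $e_l$ and an extra element $e_0$ act by $e_l(\psi_1,\psi_2)=(e_l\psi_1,-e_l\psi_2)$, $e_0(\psi_1,\psi_2)=(\psi_2,\psi_1)$. With $\{e_i\}_{i=1}^n$ a local orthonormal frame and summation over repeated indices, for $\phi\in\overline{\mathcal S}$: $N(\phi)=|\phi|^2$, $X(\phi)=\langle e_ie_0\phi,\phi\rangle e_i$, $Y(\phi)=\langle\mathbf i e_i\phi,\phi\rangle e_i$, $\omega_{ij}(\phi)=\operatorname{Im}\langle e_ie_je_0\phi,\phi\rangle$.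 A vector field $V=V^ie_i$ acts by $V\phi=V^ie_i\phi$, and a 2-form $\omega$ acts by $\omega\phi=\sum_{i,j}\omega_{ij}e_ie_j\phi$. An initial data set $(M^n,g,k)$ is a Riemannian manifold with a symmetric 2-tensor $k$. *)

theory Defs
  imports "HOL-Analysis.Analysis"
begin

text \<open>A neighbourhood of a point of the Riemannian spin manifold M^n is
an open set U of real^'n (coordinates), carrying a local frame E i (i :: 'n) of vector
fields; the Riemannian metric g is the one for which E is orthonormal (every metric
locally arises this way).  The spinor bundle is trivialised over U with fibre complex^'m,
Clifford multiplication by E i acting by the constant matrix c i; the Levi-Civita
connection coefficients are obtained from the Koszul formula, and the spin connection is
its lift.  The doubled bundle S-bar is complex^'m \<times> complex^'m.\<close>

definition herm :: "complex ^ 'm \<Rightarrow> complex ^ 'm \<Rightarrow> complex" where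
  "herm u v = (\<Sum>a\<in>UNIV. u $ a * cnj (v $ a))"

definition herm2 :: "(complex ^ 'm) \<times> (complex ^ 'm) \<Rightarrow> (complex ^ 'm) \<times> (complex ^ 'm) \<Rightarrow> complex" where
  "herm2 x y = herm (fst x) (fst y) + herm (snd x) (snd y)"

definition csmul :: "complex \<Rightarrow> (complex ^ 'm) \<times> (complex ^ 'm) \<Rightarrow> (complex ^ 'm) \<times> (complex ^ 'm)" where
  "csmul z x = (z *s fst x, z *s snd x)"

definition clif :: "('n \<Rightarrow> complex ^ 'm ^ 'm) \<Rightarrow> 'n \<Rightarrow> (complex ^ 'm) \<times> (complex ^ 'm) \<Rightarrow> (complex ^ 'm) \<times> (complex ^ 'm)" where
  "clif c l x = (c l *v fst x, - (c l *v snd x))"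

definition ezero :: "(complex ^ 'm) \<times> (complex ^ 'm) \<Rightarrow> (complex ^ 'm) \<times> (complex ^ 'm)" where
  "ezero x = (snd x, fst x)"

definition clifford_rep :: "('n::finite \<Rightarrow> complex ^ 'm ^ 'm) \<Rightarrow> bool" where
  "clifford_rep c \<longleftrightarrow>
     (\<forall>i j. c i ** c j + c j ** c i = (if i = j then - 2 * mat 1 else 0)) \<and>
     (\<forall>i u v. herm (c i *v u) v = - herm u (c i *v v))"

definition frame_coeff :: "('n::finite \<Rightarrow> real ^ 'n \<Rightarrow> real ^ 'n) \<Rightarrow> real ^ 'n \<Rightarrow> real ^ 'n \<Rightarrow> 'n \<Rightarrow> real" where
  "frame_coeff E p v k = (matrix_inv (transpose (\<chi> i. E i p)) *v v) $ k"

definition lie_bracket :: "(real ^ 'n \<Rightarrow> real ^ 'n) \<Rightarrow> (real ^ 'n \<Rightarrow> real ^ 'n) \<Rightarrow> real ^ 'n \<Rightarrow> real ^ 'n" where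
  "lie_bracket A B p = frechet_derivative B (at p) (A p) - frechet_derivative A (at p) (B p)"

text \<open>Connection coefficients Gamma i j k = g(nabla_{E_i} E_j, E_k) of the Levi-Civita connection
of the metric making E orthonormal (Koszul formula).\<close>
definition lc_coeff :: "('n::finite \<Rightarrow> real ^ 'n \<Rightarrow> real ^ 'n) \<Rightarrow> 'n \<Rightarrow> 'n \<Rightarrow> 'n \<Rightarrow> real ^ 'n \<Rightarrow> real" where
  "lc_coeff E i j k p = (1/2) *
     (frame_coeff E p (lie_bracket (E i) (E j) p) k
      - frame_coeff E p (lie_bracket (E i) (E k) p) j
      - frame_coeff E p (lie_bracket (E j) (E k) p) i)"

definition spin_nabla :: "('n::finite \<Rightarrow> real ^ 'n \<Rightarrow> real ^ 'n) \<Rightarrow> ('n \<Rightarrow> complex ^ 'm ^ 'm)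
     \<Rightarrow> (real ^ 'n \<Rightarrow> (complex ^ 'm) \<times> (complex ^ 'm)) \<Rightarrow> 'n \<Rightarrow> real ^ 'n \<Rightarrow> (complex ^ 'm) \<times> (complex ^ 'm)" where
  "spin_nabla E c \<psi> i p = frechet_derivative \<psi> (at p) (E i p)
     + (\<Sum>j\<in>UNIV. \<Sum>k\<in>UNIV. (lc_coeff E i j k p / 4) *\<^sub>R clif c j (clif c k (\<psi> p)))"

definition killing_eq :: "('n::finite \<Rightarrow> real ^ 'n \<Rightarrow> real ^ 'n) \<Rightarrow> ('n \<Rightarrow> complex ^ 'm ^ 'm)
     \<Rightarrow> ('n \<Rightarrow> 'n \<Rightarrow> real ^ 'n \<Rightarrow> real) \<Rightarrow> (real ^ 'n \<Rightarrow> (complex ^ 'm) \<times> (complex ^ 'm)) \<Rightarrow> real ^ 'n \<Rightarrow> bool" where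
  "killing_eq E c k \<psi> p \<longleftrightarrow>
     (\<forall>i. spin_nabla E c \<psi> i p =
        - (\<Sum>j\<in>UNIV. (k i j p / 2) *\<^sub>R clif c j (ezero (\<psi> p)))
        - csmul (\<i> / 2) (clif c i (\<psi> p)))"

definition Nq :: "(complex ^ 'm) \<times> (complex ^ 'm) \<Rightarrow> real" where
  "Nq x = Re (herm2 x x)"

definition Xq :: "('n \<Rightarrow> complex ^ 'm ^ 'm) \<Rightarrow> (complex ^ 'm) \<times> (complex ^ 'm) \<Rightarrow> 'n \<Rightarrow> complex" where
  "Xq c x i = herm2 (clif c i (ezero x)) x"

definition Yq :: "('n \<Rightarrow> complex ^ 'm ^ 'm) \<Rightarrow> (complex ^ 'm) \<times> (complex ^ 'm) \<Rightarrow> 'n \<Rightarrow> complex" where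
  "Yq c x i = herm2 (csmul \<i> (clif c i x)) x"

definition omegaq :: "('n \<Rightarrow> complex ^ 'm ^ 'm) \<Rightarrow> (complex ^ 'm) \<times> (complex ^ 'm) \<Rightarrow> 'n \<Rightarrow> 'n \<Rightarrow> real" where
  "omegaq c x i j = Im (herm2 (clif c i (clif c j (ezero x))) x)"

definition vact :: "('n::finite \<Rightarrow> complex ^ 'm ^ 'm) \<Rightarrow> ('n \<Rightarrow> complex) \<Rightarrow> (complex ^ 'm) \<times> (complex ^ 'm) \<Rightarrow> (complex ^ 'm) \<times> (complex ^ 'm)" where
  "vact c V x = (\<Sum>i\<in>UNIV. csmul (V i) (clif c i x))"

definition fact2 :: "('n::finite \<Rightarrow> complex ^ 'm ^ 'm) \<Rightarrow> ('n \<Rightarrow> 'n \<Rightarrow> real) \<Rightarrow> (complex ^ 'm) \<times> (complex ^ 'm) \<Rightarrow> (complex ^ 'm) \<times> (complex ^ 'm)" where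
  "fact2 c w x = (\<Sum>i\<in>UNIV. \<Sum>j\<in>UNIV. w i j *\<^sub>R clif c i (clif c j x))"

definition phi_of :: "('n::finite \<Rightarrow> complex ^ 'm ^ 'm) \<Rightarrow> (complex ^ 'm) \<times> (complex ^ 'm) \<Rightarrow> (complex ^ 'm) \<times> (complex ^ 'm)" where
  "phi_of c x = ezero (Nq x *\<^sub>R x
      - csmul \<i> (vact c (Yq c x) x)
      + ezero (vact c (Xq c x) x)
      - csmul (\<i> / 2) (ezero (fact2 c (omegaq c x) x)))"

end

theory Submission
  imports Defs
begin

text \<open>
  The spinor phi is cubic in psi: phi_of c x = T x x x for a map T = phi_tri c that is
  real-linear in each argument, so the differential of phi_of at psi is
  h \<mapsto> T h psi psi + T psi h psi + T psi psi h.
  The equation for psi says that its derivative along E_i is a real combination of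
  e_j e_0 psi, i e_i psi and e_j e_l psi with j \<noteq> l (the diagonal connection coefficients
  vanish). The cubic map intertwines each of these operators G: its differential at psi sends
  G psi to G phi, a finite computation in the Clifford algebra. By the chain rule the derivative
  of phi along E_i is the same combination applied to phi, which is the equation for phi.
\<close>

lemma has_derivative_trilinear_diagonal:
  fixes T :: "'a::euclidean_space \<Rightarrow> 'a \<Rightarrow> 'a \<Rightarrow> 'b::real_normed_vector"
  assumes lin1: "\<And>v z. linear (\<lambda>u. T u v z)"
    and lin2: "\<And>u z. linear (\<lambda>v. T u v z)"
    and lin3: "\<And>u v. linear (\<lambda>z. T u v z)"
  shows "((\<lambda>x. T x x x) has_derivative (\<lambda>h. T h x x + T x h x + T x x h)) (at x within S)"
proof -
  \<comment> \<open>Curried, T is a bounded linear map into bounded linear maps (finite dimension),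
    so the product rule for blinfun_apply applies.\<close>
  define F where "F u = Blinfun (\<lambda>v. Blinfun (T u v))" for u
  have apply3: "blinfun_apply (Blinfun (T u v)) = T u v" for u v
    using lin3 by (simp add: bounded_linear_Blinfun_apply linear_conv_bounded_linear)
  have "linear (\<lambda>v. Blinfun (T u v))" for u
    by (intro linearI; rule blinfun_eqI)
      (simp_all add: plus_blinfun.rep_eq scaleR_blinfun.rep_eq apply3
        linear_add [OF lin2] linear_scale [OF lin2])
  then have apply2: "blinfun_apply (F u) v = Blinfun (T u v)" for u v
    by (simp add: F_def bounded_linear_Blinfun_apply linear_conv_bounded_linear)
  have "linear F"
    by (intro linearI; rule blinfun_eqI; rule blinfun_eqI)
      (simp_all add: plus_blinfun.rep_eq scaleR_blinfun.rep_eq apply2 apply3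
        linear_add [OF lin1] linear_scale [OF lin1])
  then have "bounded_linear F"
    by (simp add: linear_conv_bounded_linear)
  then have "((\<lambda>x. F x x x) has_derivative (\<lambda>h. F x x h + (F x h x + F h x x))) (at x within S)"
    by (auto intro!: derivative_eq_intros bounded_linear.has_derivative [of F] simp: blinfun.add_left)
  then show ?thesis
    by (simp add: apply2 apply3 add_ac)
qed

type_synonym 'm sbar = "(complex ^ 'm) \<times> (complex ^ 'm)"

lemma csmul_add [simp]: "csmul z (x + y) = csmul z x + csmul z y"
  by (simp add: csmul_def vec_eq_iff algebra_simps)

lemma csmul_diff [simp]: "csmul z (x - y) = csmul z x - csmul z y"
  by (simp add: csmul_def vec_eq_iff algebra_simps)

lemma csmul_minus [simp]: "csmul z (- x) = - csmul z x"
  by (simp add: csmul_def vec_eq_iff)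

lemma csmul_zero [simp]: "csmul z 0 = 0"
  by (simp add: csmul_def zero_prod_def)

lemma csmul_zero_left [simp]: "csmul 0 x = 0"
  by (simp add: csmul_def zero_prod_def)

lemma csmul_one [simp]: "csmul 1 x = x"
  by (simp add: csmul_def)

lemma csmul_csmul [simp]: "csmul z (csmul w x) = csmul (z * w) x"
  by (simp add: csmul_def vec_eq_iff)

lemma csmul_add_left: "csmul (z + w) x = csmul z x + csmul w x"
  by (simp add: csmul_def vec_eq_iff algebra_simps)

lemma csmul_diff_left: "csmul (z - w) x = csmul z x - csmul w x"
  by (simp add: csmul_def vec_eq_iff algebra_simps)

lemma csmul_minus_left: "csmul (- z) x = - csmul z x"
  by (simp add: csmul_def vec_eq_iff)

lemma scaleR_eq_csmul: "r *\<^sub>R x = csmul (complex_of_real r) x"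
  by (simp add: csmul_def prod_eq_iff vec_eq_iff) (simp add: scaleR_conv_of_real)

lemma csmul_two: "csmul 2 x = x + x"
  using csmul_add_left [of 1 1 x] by simp

lemma csmul_sum [simp]: "csmul z (sum f S) = (\<Sum>i\<in>S. csmul z (f i))"
  by (induct S rule: infinite_finite_induct) auto

lemma clif_add [simp]: "clif c a (x + y) = clif c a x + clif c a y"
  by (simp add: clif_def matrix_vector_right_distrib)

lemma clif_minus [simp]: "clif c a (- x) = - clif c a x"
  by (simp add: clif_def vec_eq_iff matrix_vector_mult_def sum_negf)

lemma clif_diff [simp]: "clif c a (x - y) = clif c a x - clif c a y"
  using clif_add [of c a x "- y"] by simp

lemma clif_zero [simp]: "clif c a 0 = 0"
  using clif_add [of c a 0 0] by simp

lemma clif_csmul [simp]: "clif c a (csmul z x) = csmul z (clif c a x)"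
  by (simp add: clif_def csmul_def vec_eq_iff matrix_vector_mult_def sum_distrib_left algebra_simps)

lemma clif_sum [simp]: "clif c a (sum f S) = (\<Sum>i\<in>S. clif c a (f i))"
  by (induct S rule: infinite_finite_induct) auto

lemma ezero_add [simp]: "ezero (x + y) = ezero x + ezero y"
  by (simp add: ezero_def)

lemma ezero_minus [simp]: "ezero (- x) = - ezero x"
  by (simp add: ezero_def)

lemma ezero_diff [simp]: "ezero (x - y) = ezero x - ezero y"
  by (simp add: ezero_def)

lemma ezero_zero [simp]: "ezero 0 = 0"
  by (simp add: ezero_def zero_prod_def)

lemma ezero_csmul [simp]: "ezero (csmul z x) = csmul z (ezero x)"
  by (simp add: ezero_def csmul_def)

lemma ezero_sum [simp]: "ezero (sum f S) = (\<Sum>i\<in>S. ezero (f i))"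
  by (induct S rule: infinite_finite_induct) auto

lemma ezero_ezero [simp]: "ezero (ezero x) = x"
  by (simp add: ezero_def)

lemma ezero_clif [simp]: "ezero (clif c a x) = - clif c a (ezero x)"
  by (simp add: ezero_def clif_def)

lemma herm2_add_left [simp]: "herm2 (x + y) z = herm2 x z + herm2 y z"
  by (simp add: herm2_def herm_def sum.distrib algebra_simps)

lemma herm2_add_right [simp]: "herm2 z (x + y) = herm2 z x + herm2 z y"
  by (simp add: herm2_def herm_def sum.distrib algebra_simps)

lemma herm2_minus_left [simp]: "herm2 (- x) z = - herm2 x z"
  by (simp add: herm2_def herm_def sum_negf)

lemma herm2_minus_right [simp]: "herm2 z (- x) = - herm2 z x"
  by (simp add: herm2_def herm_def sum_negf)

lemma herm2_diff_left [simp]: "herm2 (x - y) z = herm2 x z - herm2 y z"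
  using herm2_add_left [of x "- y" z] by simp

lemma herm2_zero_left [simp]: "herm2 0 z = 0"
  using herm2_add_left [of 0 0 z] by simp

lemma herm2_zero_right [simp]: "herm2 z 0 = 0"
  using herm2_add_right [of z 0 0] by simp

lemma herm2_csmul_left [simp]: "herm2 (csmul a x) z = a * herm2 x z"
  by (simp add: herm2_def herm_def csmul_def sum_distrib_left algebra_simps)

lemma herm2_csmul_right [simp]: "herm2 z (csmul a x) = cnj a * herm2 z x"
  by (simp add: herm2_def herm_def csmul_def sum_distrib_left algebra_simps)

lemma herm2_sum_left [simp]: "herm2 (sum f S) z = (\<Sum>i\<in>S. herm2 (f i) z)"
  by (induct S rule: infinite_finite_induct) auto

lemma cnj_herm2: "cnj (herm2 x y) = herm2 y x"
  by (simp add: herm2_def herm_def mult.commute)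

lemma herm2_ezero_right: "herm2 z (ezero x) = herm2 (ezero z) x"
  by (simp add: herm2_def ezero_def add.commute)

lemma Im_herm2_self [simp]: "Im (herm2 x x) = 0"
  by (simp add: herm2_def herm_def complex_mult_cnj)

lemma herm2_eqI:
  assumes "\<And>y. herm2 u y = herm2 v y"
  shows "u = v"
proof -
  have herm_axis: "herm w (axis a 1) = w $ a" for w :: "complex ^ 'm" and a
    by (simp add: herm_def axis_def if_distrib [of "\<lambda>x. _ * cnj x"] cong: if_cong)
  have herm_zero: "herm w 0 = 0" for w :: "complex ^ 'm"
    by (simp add: herm_def)
  have "fst u $ a = fst v $ a" "snd u $ a = snd v $ a" for a
    using assms [of "(axis a 1, 0)"] assms [of "(0, axis a 1)"]
    by (simp_all add: herm2_def herm_axis herm_zero)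
  then show ?thesis
    by (simp add: prod_eq_iff vec_eq_iff)
qed

text \<open>
  The imaginary part in the 2-form term is expanded as
  Im h = (h - cnj h) / (2 i); since cnj h_ab = h_ba, this turns omega into the antisymmetrised
  Clifford products e_a e_b - e_b e_a.
\<close>

definition phi_tri ::
    "('n::finite \<Rightarrow> complex ^ 'm ^ 'm) \<Rightarrow> 'm sbar \<Rightarrow> 'm sbar \<Rightarrow> 'm sbar \<Rightarrow> 'm sbar"
  where
  "phi_tri c u v z = csmul (herm2 u v) (ezero z)
     + ezero (\<Sum>a\<in>UNIV. csmul (herm2 (clif c a u) v) (clif c a z))
     + (\<Sum>a\<in>UNIV. csmul (herm2 (clif c a (ezero u)) v) (clif c a z))
     - csmul (1/4) (\<Sum>a\<in>UNIV. \<Sum>b\<in>UNIV. csmul (herm2 (clif c a (clif c b (ezero u))) v)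
          (clif c a (clif c b z) - clif c b (clif c a z)))"

definition phi_diff ::
    "('n::finite \<Rightarrow> complex ^ 'm ^ 'm) \<Rightarrow> 'm sbar \<Rightarrow> 'm sbar \<Rightarrow> 'm sbar" where
  "phi_diff c x h = phi_tri c h x x + phi_tri c x h x + phi_tri c x x h"

lemma linear_phi_tri_1: "linear (\<lambda>u. phi_tri c u v z)"
  by (rule linearI)
    (simp_all add: phi_tri_def scaleR_eq_csmul csmul_add_left sum.distrib sum_subtractf algebra_simps)

lemma linear_phi_tri_2: "linear (\<lambda>v. phi_tri c u v z)"
  by (rule linearI)
    (simp_all add: phi_tri_def scaleR_eq_csmul csmul_add_left sum.distrib sum_subtractf algebra_simps)

lemma linear_phi_tri_3: "linear (\<lambda>z. phi_tri c u v z)"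
  by (rule linearI)
    (simp_all add: phi_tri_def scaleR_eq_csmul csmul_add_left sum.distrib sum_subtractf algebra_simps)

text \<open>
  The operators i e_j, e_j e_0 and e_j e_k occurring in the equation, as constants: their simp
  rules below commute them past Clifford multiplication and e_0 and move them across herm2,
  so that, after pairing with an arbitrary spinor (herm2_eqI), both sides of an intertwining
  identity simplify to the same normal form.
\<close>

definition i_clif :: "('n \<Rightarrow> complex ^ 'm ^ 'm) \<Rightarrow> 'n \<Rightarrow> 'm sbar \<Rightarrow> 'm sbar" where
  "i_clif c j y = csmul \<i> (clif c j y)"

definition clif_ezero :: "('n \<Rightarrow> complex ^ 'm ^ 'm) \<Rightarrow> 'n \<Rightarrow> 'm sbar \<Rightarrow> 'm sbar" where
  "clif_ezero c j y = clif c j (ezero y)"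

definition clif_clif :: "('n \<Rightarrow> complex ^ 'm ^ 'm) \<Rightarrow> 'n \<Rightarrow> 'n \<Rightarrow> 'm sbar \<Rightarrow> 'm sbar" where
  "clif_clif c j k y = clif c j (clif c k y)"

lemma if_zero_distribs:
  "herm2 (if P then u else 0) w = (if P then herm2 u w else 0)"
  "csmul z (if P then u else 0) = (if P then csmul z u else 0)"
  "csmul (if P then z else 0) u = (if P then csmul z u else 0)"
  "clif c a (if P then u else 0) = (if P then clif c a u else 0)"
  "(if P then w' else 0) * (z' :: complex) = (if P then w' * z' else 0)"
  "(\<Sum>b\<in>S. if P then g b else (0 :: 'b::comm_monoid_add)) = (if P then sum g S else 0)"
  by auto

lemma i_mult_i_mult: "\<i> * (\<i> * z) = - z"
  by (simp add: mult.assoc [symmetric])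

lemma sum_csmul_mult: "(\<Sum>a\<in>S. csmul (z * g a) (f a)) = csmul z (\<Sum>a\<in>S. csmul (g a) (f a))"
  by simp

lemma clif_eq_i_clif: "clif c j y = - csmul \<i> (i_clif c j y)"
  unfolding i_clif_def by (simp add: csmul_minus_left)

lemma clif_eq_clif_ezero: "clif c j y = clif_ezero c j (ezero y)"
  unfolding clif_ezero_def by simp

lemma clif_clif_simps [simp]:
  "clif_clif c j k (x + y) = clif_clif c j k x + clif_clif c j k y"
  "clif_clif c j k (- x) = - clif_clif c j k x"
  "clif_clif c j k (x - y) = clif_clif c j k x - clif_clif c j k y"
  "clif_clif c j k (csmul z x) = csmul z (clif_clif c j k x)"
  "clif_clif c j k (sum f S) = (\<Sum>i\<in>S. clif_clif c j k (f i))"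
  "ezero (clif_clif c j k y) = clif_clif c j k (ezero y)"
  by (simp_all add: clif_clif_def)

lemma clif_clif_eq: "clif c j (clif c k y) = clif_clif c j k y"
  unfolding clif_clif_def ..

context
  fixes c :: "'n::finite \<Rightarrow> complex ^ 'm ^ 'm"
  assumes clifford: "clifford_rep c"
begin

lemma clif_anticomm:
  "clif c a (clif c b x) = - clif c b (clif c a x) + (if a = b then - 2 *\<^sub>R x else 0)"
proof -
  have matrix_anticomm:
    "c a *v (c b *v u) + c b *v (c a *v u) = (if a = b then (- 2) *s u else 0)" for u
  proof -
    have "c a *v (c b *v u) + c b *v (c a *v u) = (c a ** c b + c b ** c a) *v u"
      by (simp add: matrix_vector_mul_assoc matrix_vector_mult_add_rdistrib)
    also have "\<dots> = (if a = b then (- 2 * mat 1) *v u else 0)"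
      using clifford by (simp add: clifford_rep_def)
    also have "\<dots> = (if a = b then (- 2) *s u else 0)"
      by (simp add: vec_eq_iff matrix_vector_mult_def mat_def
          if_distrib [of "\<lambda>x. x * _"] if_distrib [of "\<lambda>x. - (2 * x)"] cong: if_cong)
    finally show ?thesis .
  qed
  from matrix_anticomm [of "fst x"] matrix_anticomm [of "snd x"] show ?thesis
    by (auto simp: clif_def prod_eq_iff vec_eq_iff scaleR_conv_of_real eq_neg_iff_add_eq_0
        matrix_vector_mult_diff_distrib [of _ 0, simplified])
qed

lemma clif_clif_same [simp]: "clif c a (clif c a x) = - x"
proof -
  have "2 *\<^sub>R clif c a (clif c a x) = 2 *\<^sub>R (- x)"
    using clif_anticomm [of a a x] by (simp add: scaleR_2 algebra_simps del: scaleR_minus_right)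
  then show ?thesis
    by (metis scaleR_cancel_left zero_neq_numeral)
qed

lemma herm2_clif_right: "herm2 z (clif c a w) = - herm2 (clif c a z) w"
  using clifford by (simp add: clifford_rep_def herm2_def clif_def herm_def sum_negf)

lemma phi_of_eq_phi_tri: "phi_of c x = phi_tri c x x x"
proof -
  let ?h = "\<lambda>a b. herm2 (clif c a (clif c b (ezero x))) x"
  let ?W = "\<lambda>a b. clif c a (clif c b x)"
  have Re_eq: "complex_of_real (Re z) = z" if "Im z = 0" for z
    using that by (simp add: complex_eq_iff)
  have Im_eq: "complex_of_real (Im z) = - (\<i>/2) * (z - cnj z)" for z
    by (simp add: complex_eq_iff)
  have cnj_h: "cnj (?h a b) = ?h b a" for a b
    by (simp add: cnj_herm2 herm2_clif_right herm2_ezero_right)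
  have "fact2 c (omegaq c x) x
      = (\<Sum>a\<in>UNIV. \<Sum>b\<in>UNIV. csmul (- (\<i>/2) * (?h a b - ?h b a)) (?W a b))"
    unfolding fact2_def omegaq_def
    by (simp add: scaleR_eq_csmul Im_eq cnj_h)
  also have "\<dots> = csmul (- (\<i>/2)) ((\<Sum>a\<in>UNIV. \<Sum>b\<in>UNIV. csmul (?h a b) (?W a b))
      - (\<Sum>a\<in>UNIV. \<Sum>b\<in>UNIV. csmul (?h b a) (?W a b)))"
    by (simp only: right_diff_distrib csmul_diff_left sum_subtractf csmul_diff csmul_sum csmul_csmul)
  also have "(\<Sum>a\<in>UNIV. \<Sum>b\<in>UNIV. csmul (?h b a) (?W a b))
      = (\<Sum>a\<in>UNIV. \<Sum>b\<in>UNIV. csmul (?h a b) (?W b a))"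
    by (rule sum.swap)
  finally have omega: "fact2 c (omegaq c x) x
      = csmul (- (\<i>/2)) (\<Sum>a\<in>UNIV. \<Sum>b\<in>UNIV. csmul (?h a b) (?W a b - ?W b a))"
    by (simp add: sum_subtractf)
  have N: "Nq x *\<^sub>R x = csmul (herm2 x x) x"
    by (simp add: Nq_def scaleR_eq_csmul Re_eq)
  show ?thesis
    unfolding phi_of_def phi_tri_def omega N vact_def Yq_def Xq_def
    by (simp add: csmul_minus_left sum_negf)
qed

lemma has_derivative_phi_of: "(phi_of c has_derivative phi_diff c x) (at x within S)"
  using has_derivative_trilinear_diagonal [of "phi_tri c",
      OF linear_phi_tri_1 linear_phi_tri_2 linear_phi_tri_3]
  by (simp add: phi_of_eq_phi_tri [abs_def] phi_diff_def [abs_def])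

lemma i_clif_simps [simp]:
  "i_clif c j (x + y) = i_clif c j x + i_clif c j y" "i_clif c j (- x) = - i_clif c j x"
  "i_clif c j (x - y) = i_clif c j x - i_clif c j y"
  "i_clif c j (csmul z x) = csmul z (i_clif c j x)"
  "i_clif c j (sum f S) = (\<Sum>i\<in>S. i_clif c j (f i))"
  "clif c a (i_clif c j y) = - i_clif c j (clif c a y) + (if a = j then csmul (- 2 * \<i>) y else 0)"
  "ezero (i_clif c j y) = - i_clif c j (ezero y)"
  "herm2 w (i_clif c j u) = herm2 (i_clif c j w) u"
  unfolding i_clif_def using clif_anticomm [of a j y]
  by (simp_all add: mult.commute scaleR_eq_csmul csmul_minus_left herm2_clif_right)

lemma clif_ezero_simps [simp]:
  "clif_ezero c j (x + y) = clif_ezero c j x + clif_ezero c j y"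
  "clif_ezero c j (- x) = - clif_ezero c j x"
  "clif_ezero c j (x - y) = clif_ezero c j x - clif_ezero c j y"
  "clif_ezero c j (csmul z x) = csmul z (clif_ezero c j x)"
  "clif_ezero c j (sum f S) = (\<Sum>i\<in>S. clif_ezero c j (f i))"
  "clif c a (clif_ezero c j y)
     = clif_ezero c j (clif c a y) + (if a = j then csmul (- 2) (ezero y) else 0)"
  "ezero (clif_ezero c j y) = - clif_ezero c j (ezero y)"
  "herm2 w (clif_ezero c j u) = herm2 (clif_ezero c j w) u"
  unfolding clif_ezero_def using clif_anticomm [of a j "ezero y"]
  by (simp_all add: scaleR_eq_csmul herm2_clif_right herm2_ezero_right)

lemma clif_clif_comm [simp]:
  assumes "j \<noteq> k"
  shows "clif c a (clif_clif c j k y) = clif_clif c j k (clif c a y)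
     + (if a = j then csmul (- 2) (clif c k y) else 0) + (if a = k then csmul 2 (clif c j y) else 0)"
  unfolding clif_clif_def
  using assms clif_anticomm [of a j "clif c k y"] clif_anticomm [of a k y] clif_anticomm [of a j y]
    clif_anticomm [of k j y] clif_anticomm [of k j "clif c k y"]
  by (auto simp: scaleR_eq_csmul algebra_simps csmul_two)

lemma herm2_clif_clif_right [simp]:
  "j \<noteq> k \<Longrightarrow> herm2 w (clif_clif c j k u) = - herm2 (clif_clif c j k w) u"
  unfolding clif_clif_def using clif_anticomm [of k j w]
  by (simp add: herm2_clif_right)

lemma clif_clif_swap_eq: "j \<noteq> k \<Longrightarrow> clif c k (clif c j y) = - clif_clif c j k y"
  unfolding clif_clif_def using clif_anticomm [of k j y] by simp

lemmas intertwining_expand_simps = if_zero_distribs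
  csmul_add_left csmul_diff_left csmul_minus_left sum.distrib sum_subtractf sum_negf
  sum_csmul_mult left_diff_distrib mult.assoc

lemmas intertwining_collect_simps = algebra_simps i_mult_i_mult sum_csmul_mult

declare herm2_sum_left [simp del] csmul_sum [simp del]

lemma phi_diff_i_clif: "phi_diff c x (csmul \<i> (clif c j x)) = csmul \<i> (clif c j (phi_of c x))"
proof -
  have "phi_diff c x (i_clif c j x) = i_clif c j (phi_tri c x x x)"
    unfolding phi_diff_def phi_tri_def
    by (rule herm2_eqI)
      (simp add: intertwining_expand_simps clif_eq_i_clif [of c j],
       simp add: intertwining_collect_simps)
  then show ?thesis
    by (simp add: i_clif_def phi_of_eq_phi_tri)
qed

lemma phi_diff_clif_ezero:
  "phi_diff c x (clif c j (ezero x)) = clif c j (ezero (phi_of c x))"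
proof -
  have "phi_diff c x (clif_ezero c j x) = clif_ezero c j (phi_tri c x x x)"
    unfolding phi_diff_def phi_tri_def
    by (rule herm2_eqI)
      (simp add: intertwining_expand_simps clif_eq_clif_ezero [of c j],
       simp add: intertwining_collect_simps)
  then show ?thesis
    by (simp add: clif_ezero_def phi_of_eq_phi_tri)
qed

lemma phi_diff_clif_clif:
  assumes "j \<noteq> k"
  shows "phi_diff c x (clif c j (clif c k x)) = clif c j (clif c k (phi_of c x))"
proof -
  have "phi_diff c x (clif_clif c j k x) = clif_clif c j k (phi_tri c x x x)"
    unfolding phi_diff_def phi_tri_def
    by (rule herm2_eqI)
      (simp add: assms intertwining_expand_simps clif_clif_eq [of c j k] clif_clif_swap_eq [OF assms],
       simp add: assms intertwining_collect_simps)
  then show ?thesis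
    by (simp add: clif_clif_def phi_of_eq_phi_tri)
qed

end

lemma lc_coeff_diag [simp]: "lc_coeff E i j j p = 0"
  by (simp add: lc_coeff_def lie_bracket_def frame_coeff_def)

lemma killing_eq_comp:
  fixes F :: "'m::finite sbar \<Rightarrow> 'm sbar"
    and c :: "'n::finite \<Rightarrow> complex ^ 'm ^ 'm"
  assumes \<psi>: "\<psi> differentiable at p" "killing_eq E c k \<psi> p"
    and F_deriv: "(F has_derivative F') (at (\<psi> p))"
    and F'_clif_ezero: "\<And>j. F' (clif c j (ezero (\<psi> p))) = clif c j (ezero (F (\<psi> p)))"
    and F'_i_clif: "\<And>j. F' (csmul \<i> (clif c j (\<psi> p))) = csmul \<i> (clif c j (F (\<psi> p)))"
    and F'_clif_clif: "\<And>j l. j \<noteq> l \<Longrightarrow>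
      F' (clif c j (clif c l (\<psi> p))) = clif c j (clif c l (F (\<psi> p)))"
  shows "killing_eq E c k (\<lambda>q. F (\<psi> q)) p"
proof -
  interpret F': bounded_linear F'
    using F_deriv by (rule has_derivative_bounded_linear)
  define \<psi>' where "\<psi>' = frechet_derivative \<psi> (at p)"
  have "((\<lambda>q. F (\<psi> q)) has_derivative F' \<circ> \<psi>') (at p)"
    using diff_chain_at [OF \<psi>(1) [unfolded frechet_derivative_works] F_deriv]
    by (simp add: \<psi>'_def o_def)
  then have chain: "frechet_derivative (\<lambda>q. F (\<psi> q)) (at p) = F' \<circ> \<psi>'"
    by (rule frechet_derivative_at [symmetric])
  let ?A = "\<lambda>i w. - (\<Sum>j\<in>UNIV. (k i j p / 2) *\<^sub>R clif c j (ezero w))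
    - csmul (\<i> / 2) (clif c i w)"
  let ?B = "\<lambda>i w. (\<Sum>j\<in>UNIV. \<Sum>l\<in>UNIV. (lc_coeff E i j l p / 4) *\<^sub>R clif c j (clif c l w))"
  have half: "csmul (\<i> / 2) w = (1/2) *\<^sub>R csmul \<i> w" for w :: "'m sbar"
    by (simp add: scaleR_eq_csmul)
  have "F' (?A i (\<psi> p)) = ?A i (F (\<psi> p))" for i
    by (simp add: F'.sum F'.scaleR F'.diff F'.neg half F'_clif_ezero F'_i_clif)
  moreover have "F' (?B i (\<psi> p)) = ?B i (F (\<psi> p))" for i
  proof -
    \<comment> \<open>F' need not commute with e_j e_j = -1, but these terms have coefficient zero.\<close>
    have summand: "(lc_coeff E i j l p / 4) *\<^sub>R F' (clif c j (clif c l (\<psi> p)))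
        = (lc_coeff E i j l p / 4) *\<^sub>R clif c j (clif c l (F (\<psi> p)))" for j l
      by (cases "j = l") (simp_all add: F'_clif_clif)
    show ?thesis
      by (simp only: F'.sum F'.scaleR summand)
  qed
  moreover have "\<psi>' (E i p) = ?A i (\<psi> p) - ?B i (\<psi> p)" for i
    using \<psi>(2) by (simp add: killing_eq_def spin_nabla_def \<psi>'_def algebra_simps)
  ultimately show ?thesis
    by (simp add: killing_eq_def spin_nabla_def chain F'.diff)
qed

lemma killing_eq_phi_of:
  assumes "clifford_rep c" and \<psi>_diff: "\<psi> differentiable at p" and "killing_eq E c k \<psi> p"
  shows "(\<lambda>q. phi_of c (\<psi> q)) differentiable at p \<and> killing_eq E c k (\<lambda>q. phi_of c (\<psi> q)) p"
proof
  have \<phi>_deriv: "(phi_of c has_derivative phi_diff c (\<psi> p)) (at (\<psi> p))"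
    by (rule has_derivative_phi_of [OF assms(1)])
  then show "(\<lambda>q. phi_of c (\<psi> q)) differentiable at p"
    using differentiable_chain_at [OF \<psi>_diff] by (auto simp: differentiable_def o_def)
  show "killing_eq E c k (\<lambda>q. phi_of c (\<psi> q)) p"
    using \<psi>_diff assms(3) \<phi>_deriv
    by (rule killing_eq_comp)
      (simp_all add: phi_diff_clif_ezero [OF assms(1)] phi_diff_i_clif [OF assms(1)]
        phi_diff_clif_clif [OF assms(1)])
qed

theorem theorem1p6:
  fixes U :: "(real ^ 'n) set"
    and E :: "'n \<Rightarrow> real ^ 'n \<Rightarrow> real ^ 'n"
    and c :: "'n \<Rightarrow> complex ^ 'm ^ 'm"
    and k :: "'n \<Rightarrow> 'n \<Rightarrow> real ^ 'n \<Rightarrow> real"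
    and \<psi> :: "real ^ 'n \<Rightarrow> (complex ^ 'm) \<times> (complex ^ 'm)"
  assumes "open U"
    and "\<forall>i. E i differentiable_on U"
    and "\<forall>p\<in>U. det (\<chi> i. E i p) \<noteq> 0"
    and "\<forall>i j p. k i j p = k j i p"
    and "clifford_rep c"
    and "CARD('m) = 2 ^ (CARD('n) div 2)"
    and "\<psi> differentiable_on U"
    and "\<forall>v. continuous_on U (\<lambda>p. frechet_derivative \<psi> (at p) v)"
    and "\<forall>p\<in>U. killing_eq E c k \<psi> p"
  shows "\<forall>p\<in>U. (\<lambda>q. phi_of c (\<psi> q)) differentiable (at p)
                \<and> killing_eq E c k (\<lambda>q. phi_of c (\<psi> q)) p"
  \<comment> \<open>The claim is pointwise.\<close>
  using assms(1,5,7,9) killing_eq_phi_of differentiable_on_eq_differentiable_at by blast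

end
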